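(* Let $n\ge1$. Identify each $n$-element subset of $\langle n\rangle$ with a partition inside the $n\times n$ square (as described in the context), so that meet $\wedge$ and join $\vee$ correspond to intersection and union of diagrams and $\alpha^t$ is the transpose. Define $\pi_n(\gamma):=(\gamma\wedge\gamma^t,\gamma\vee\gamma^t)$ for $\gamma\in\binom{\langle n\rangle}{n}$, and let $(\alpha,\beta)$ be in the image of $\pi_n$ (so $\alpha\subseteq\beta$ are symmetric partitions). Let $\Pi_+(\alpha,\beta)$ be the set of boxes of $\beta\setminus\alpha$ lying strictly above the main diagonal, and let $S_1,\dots,S_k$ be its connected components (two boxes being adjacent when they share an edge). For $I\subseteq[k]$ put $\gamma_I:=\alpha\cup\bigl(\bigcup_{i\notin I}S_i^t\bigr)\cup\bigl(\bigcup_{i\in I}S_i\bigr)$, where $S^t$ denotes the reflection of a set of boxes in the main diagonal. Then $I\mapsto\gamma_I$ is a bijection from the set of subsets of $[k]$ (i.e. subsets of the set of connected components of $\Pi_+(\alpha,\beta)$) onto the fiber $\pi_n^{-1}(\alpha,\beta)$. There is a unique Northeast element of $\pi_n^{-1}(\alpha,\beta)$, namely $\gamma_{[k]}$, and a unique Southwest element, namely $\gamma_{\emptyset}$.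
   Context: $\langle n\rangle=\{\bar n<\dots<\bar1<1<\dots<n\}$ with $\bar\imath=-i$. An $n$-element subset $\alpha\subseteq\langle n\rangle$ corresponds to a partition in the $n\times n$ square: take the lattice path from the lower-left to the upper-right corner whose $j$-th unit step is upward if the $j$-th smallest element of $\langle n\rangle$ lies in $\alpha$ and rightward otherwise; the partition consists of the boxes between the path and the top and left edges. Boxes are indexed $(r,c)$ (row from top, column from left); box $(r,c)$ is above the main diagonal if $c>r$. The transpose $\alpha^t$ is the reflection of the diagram in the main diagonal (as a set, $\alpha^t=\langle n\rangle\setminus\{\bar\alpha_1,\dots,\bar\alpha_n\}$). A partition $\lambda$ in the square is Northeast if $\lambda_-^t\subseteq\lambda_+$, where $\lambda_+$ (resp. $\lambda_-$) is the set of boxes of $\lambda$ on or above (resp. on or below) the main diagonal, i.e. if for every box $(r,c)\in\lambda$ with $r>c$ the box $(c,r)$ lies in $\lambda$; $\lambda$ is Southwest if $\lambda^t$ is Northeast. *)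

theory Defs
  imports Main
begin

text \<open>Boxes of the n x n square are pairs (r,c) with 1 \<le> r,c \<le> n,
  r = row counted from the top, c = column counted from the left.
  A partition inside the square (Young diagram, English convention, anchored at the
  upper-left corner) is a set of boxes closed under moving up and moving left.
  These are exactly the diagrams of the n-element subsets of the set \<langle>n\<rangle>.\<close>

type_synonym box = "nat \<times> nat"

definition in_square_partition :: "nat \<Rightarrow> box set \<Rightarrow> bool" where
  "in_square_partition n L \<longleftrightarrow>
     L \<subseteq> {1..n} \<times> {1..n} \<and>
     (\<forall>r c r' c'. (r, c) \<in> L \<and> 1 \<le> r' \<and> r' \<le> r \<and> 1 \<le> c' \<and> c' \<le> c \<longrightarrow> (r', c') \<in> L)"

definition transp_boxes :: "box set \<Rightarrow> box set" where
  "transp_boxes S = (\<lambda>(r, c). (c, r)) ` S"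

definition pi_map :: "box set \<Rightarrow> box set \<times> box set" where
  "pi_map \<gamma> = (\<gamma> \<inter> transp_boxes \<gamma>, \<gamma> \<union> transp_boxes \<gamma>)"

definition fiber :: "nat \<Rightarrow> box set \<Rightarrow> box set \<Rightarrow> box set set" where
  "fiber n \<alpha> \<beta> = {\<gamma>. in_square_partition n \<gamma> \<and> pi_map \<gamma> = (\<alpha>, \<beta>)}"

definition northeast :: "box set \<Rightarrow> bool" where
  "northeast L \<longleftrightarrow> (\<forall>r c. (r, c) \<in> L \<and> r > c \<longrightarrow> (c, r) \<in> L)"

definition southwest :: "box set \<Rightarrow> bool" where
  "southwest L \<longleftrightarrow> northeast (transp_boxes L)"

definition Pi_plus :: "box set \<Rightarrow> box set \<Rightarrow> box set" where
  "Pi_plus \<alpha> \<beta> = {(r, c). (r, c) \<in> \<beta> - \<alpha> \<and> c > r}"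

definition box_adj :: "box \<Rightarrow> box \<Rightarrow> bool" where
  "box_adj x y \<longleftrightarrow>
     (fst x = fst y \<and> (snd x = snd y + 1 \<or> snd y = snd x + 1)) \<or>
     (snd x = snd y \<and> (fst x = fst y + 1 \<or> fst y = fst x + 1))"

definition adj_within :: "box set \<Rightarrow> (box \<times> box) set" where
  "adj_within P = {(x, y). x \<in> P \<and> y \<in> P \<and> box_adj x y}"

definition component_of :: "box set \<Rightarrow> box \<Rightarrow> box set" where
  "component_of P x = {y \<in> P. (x, y) \<in> (adj_within P)\<^sup>*}"

definition components :: "box set \<Rightarrow> box set set" where
  "components P = component_of P ` P"

definition gamma_I :: "box set \<Rightarrow> box set \<Rightarrow> box set set \<Rightarrow> box set" where
  "gamma_I \<alpha> \<beta> I =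
     \<alpha> \<union> (\<Union>S \<in> components (Pi_plus \<alpha> \<beta>) - I. transp_boxes S) \<union> (\<Union>S \<in> I. S)"

end

theory Submission
  imports Defs
begin

text \<open>An element \<gamma> of the fiber contains \<alpha>, is contained in \<beta>, and contains exactly one of
  x, x^t for every box x of Pi_plus \<alpha> \<beta>.  This choice is constant on connected components: if
  x \<in> \<gamma>, x^t \<notin> \<gamma> and y \<in> \<beta> is adjacent to x, then either y lies weakly up-left of x, or x^t lies
  weakly up-left of y^t, so down-closure of \<gamma> forces y \<in> \<gamma>.  Conversely every choice that is
  constant on components yields a partition, because the upper or left neighbour of a box of
  \<beta> - \<alpha> is either in \<alpha> or on the same side of the diagonal, hence in the same component.
  Choosing all components gives the unique Northeast element; transposition replaces a choice
  by its complement, which turns this into the statement about the Southwest element.\<close>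

lemma mem_transp_boxes [simp]: "x \<in> transp_boxes S \<longleftrightarrow> prod.swap x \<in> S"
  by (force simp: transp_boxes_def image_iff)

lemma transp_boxes_transp_boxes [simp]: "transp_boxes (transp_boxes S) = S"
  by auto

lemma mem_Pi_plus [simp]: "(r, c) \<in> Pi_plus \<alpha> \<beta> \<longleftrightarrow> (r, c) \<in> \<beta> \<and> (r, c) \<notin> \<alpha> \<and> r < c"
  by (auto simp: Pi_plus_def)

lemma box_adj_sym: "box_adj x y \<longleftrightarrow> box_adj y x"
  by (auto simp: box_adj_def)

lemma box_adj_swap [simp]: "box_adj (prod.swap x) (prod.swap y) \<longleftrightarrow> box_adj x y"
  by (auto simp: box_adj_def)

lemma box_adj_comparable:
  "box_adj (a, b) (c, d) \<Longrightarrow> (a \<le> c \<and> b \<le> d) \<or> (c \<le> a \<and> d \<le> b)"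
  by (auto simp: box_adj_def)

lemma box_adj_same_side:
  "box_adj (r, c) (r', c') \<Longrightarrow> r \<noteq> c \<Longrightarrow> r' \<noteq> c' \<Longrightarrow> r < c \<longleftrightarrow> r' < c'"
  by (auto simp: box_adj_def)

lemma in_square_partition_downward:
  "in_square_partition n L \<Longrightarrow> (r, c) \<in> L \<Longrightarrow> 1 \<le> r' \<Longrightarrow> r' \<le> r \<Longrightarrow> 1 \<le> c' \<Longrightarrow> c' \<le> c \<Longrightarrow> (r', c') \<in> L"
  unfolding in_square_partition_def by blast

lemma in_square_partition_pos: "in_square_partition n L \<Longrightarrow> (r, c) \<in> L \<Longrightarrow> 1 \<le> r \<and> 1 \<le> c"
  unfolding in_square_partition_def by auto

lemma in_square_partition_transp:
  "in_square_partition n L \<Longrightarrow> in_square_partition n (transp_boxes L)"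
  unfolding in_square_partition_def by auto

lemma in_square_partition_Int:
  "in_square_partition n L \<Longrightarrow> in_square_partition n M \<Longrightarrow> in_square_partition n (L \<inter> M)"
  unfolding in_square_partition_def by blast

lemma in_square_partition_Un:
  "in_square_partition n L \<Longrightarrow> in_square_partition n M \<Longrightarrow> in_square_partition n (L \<union> M)"
  unfolding in_square_partition_def by blast

lemma in_square_partitionI:
  assumes square: "L \<subseteq> {1..n} \<times> {1..n}"
    and left: "\<And>r c. (r, Suc c) \<in> L \<Longrightarrow> 0 < c \<Longrightarrow> (r, c) \<in> L"
    and up: "\<And>r c. (Suc r, c) \<in> L \<Longrightarrow> 0 < r \<Longrightarrow> (r, c) \<in> L"
  shows "in_square_partition n L"
  unfolding in_square_partition_def
proof (intro conjI allI impI)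
  fix r c r' c'
  assume "(r, c) \<in> L \<and> 1 \<le> r' \<and> r' \<le> r \<and> 1 \<le> c' \<and> c' \<le> c"
  then have rc: "(r, c) \<in> L" and "1 \<le> r'" "r' \<le> r" "1 \<le> c'" "c' \<le> c" by auto
  from \<open>c' \<le> c\<close> have "(r, c') \<in> L"
    by (induction rule: inc_induct) (use rc left \<open>1 \<le> c'\<close> in auto)
  with \<open>r' \<le> r\<close> show "(r', c') \<in> L"
    by (induction rule: inc_induct) (use up \<open>1 \<le> r'\<close> in auto)
qed (fact square)

lemma in_square_partition_adjacent:
  assumes \<gamma>: "in_square_partition n \<gamma>" and y: "(a, b) \<in> \<gamma>" "(b, a) \<notin> \<gamma>"
    and z: "(c, d) \<in> \<gamma> \<union> transp_boxes \<gamma>" and adj: "box_adj (a, b) (c, d)"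
  shows "(c, d) \<in> \<gamma>"
proof (rule ccontr)
  assume "(c, d) \<notin> \<gamma>"
  with z have dc: "(d, c) \<in> \<gamma>" by simp
  have pos: "1 \<le> a" "1 \<le> b" "1 \<le> c" "1 \<le> d"
    using in_square_partition_pos[OF \<gamma>] y dc by auto
  from box_adj_comparable[OF adj] show False
  proof
    assume "a \<le> c \<and> b \<le> d"
    then have "(b, a) \<in> \<gamma>" using in_square_partition_downward[OF \<gamma> dc] pos by simp
    with y show False by simp
  next
    assume "c \<le> a \<and> d \<le> b"
    then have "(c, d) \<in> \<gamma>" using in_square_partition_downward[OF \<gamma> y(1)] pos by simp
    with \<open>(c, d) \<notin> \<gamma>\<close> show False by simp
  qed
qed

lemma sym_adj_within: "sym (adj_within P)"
  by (auto simp: sym_def adj_within_def box_adj_sym)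

lemma component_of_subset: "component_of P x \<subseteq> P"
  by (auto simp: component_of_def)

lemma mem_component_of_self: "x \<in> P \<Longrightarrow> x \<in> component_of P x"
  by (simp add: component_of_def)

lemma component_of_eqI:
  assumes "y \<in> component_of P x"
  shows "component_of P y = component_of P x"
proof -
  have xy: "(x, y) \<in> (adj_within P)\<^sup>*"
    using assms by (simp add: component_of_def)
  then have "(y, x) \<in> (adj_within P)\<^sup>*"
    using sym_rtrancl[OF sym_adj_within] by (blast dest: symD)
  with xy show ?thesis
    by (auto simp: component_of_def intro: rtrancl_trans)
qed

lemma component_of_eq_adjacent:
  "x \<in> P \<Longrightarrow> y \<in> P \<Longrightarrow> box_adj x y \<Longrightarrow> component_of P y = component_of P x"
  by (rule component_of_eqI) (auto simp: component_of_def adj_within_def)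

lemma components_subset: "S \<in> components P \<Longrightarrow> S \<subseteq> P"
  using component_of_subset by (auto simp: components_def)

lemma components_nonempty: "S \<in> components P \<Longrightarrow> S \<noteq> {}"
  using mem_component_of_self by (fastforce simp: components_def)

lemma components_eq_component_of: "S \<in> components P \<Longrightarrow> x \<in> S \<Longrightarrow> S = component_of P x"
  using component_of_eqI by (fastforce simp: components_def)

lemma component_of_in_components: "x \<in> P \<Longrightarrow> component_of P x \<in> components P"
  by (simp add: components_def)

lemma mem_Union_components:
  assumes "I \<subseteq> components P"
  shows "x \<in> \<Union>I \<longleftrightarrow> x \<in> P \<and> component_of P x \<in> I"
  using assms components_subset components_eq_component_of mem_component_of_self
  by blast


lemma fiberD:
  assumes "\<gamma> \<in> fiber n \<alpha> \<beta>"
  shows "in_square_partition n \<gamma>" "\<gamma> \<inter> transp_boxes \<gamma> = \<alpha>" "\<gamma> \<union> transp_boxes \<gamma> = \<beta>"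
  using assms by (auto simp: fiber_def pi_map_def)

lemma pi_map_transp_boxes: "pi_map (transp_boxes \<gamma>) = pi_map \<gamma>"
  by (simp add: pi_map_def Int_commute Un_commute)

lemma transp_boxes_in_fiber: "\<gamma> \<in> fiber n \<alpha> \<beta> \<Longrightarrow> transp_boxes \<gamma> \<in> fiber n \<alpha> \<beta>"
  by (simp add: fiber_def pi_map_transp_boxes in_square_partition_transp)

lemma fiber_component_of_subset:
  assumes \<gamma>: "\<gamma> \<in> fiber n \<alpha> \<beta>" and x: "x \<in> Pi_plus \<alpha> \<beta>" "x \<in> \<gamma>"
  shows "component_of (Pi_plus \<alpha> \<beta>) x \<subseteq> \<gamma>"
proof
  fix y
  assume "y \<in> component_of (Pi_plus \<alpha> \<beta>) x"
  then have "(x, y) \<in> (adj_within (Pi_plus \<alpha> \<beta>))\<^sup>*"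
    by (simp add: component_of_def)
  then show "y \<in> \<gamma>"
  proof (induction rule: rtrancl_induct)
    case base
    show ?case by (fact x(2))
  next
    case (step y z)
    obtain a b c d where yz: "y = (a, b)" "z = (c, d)" by fastforce
    from step.hyps(2) yz have y: "(a, b) \<in> Pi_plus \<alpha> \<beta>" and z: "(c, d) \<in> Pi_plus \<alpha> \<beta>"
      and adj: "box_adj (a, b) (c, d)"
      by (auto simp: adj_within_def)
    have ab: "(a, b) \<in> \<gamma>" using step.IH yz by simp
    have "(b, a) \<notin> \<gamma>"
    proof
      assume "(b, a) \<in> \<gamma>"
      with ab have "(a, b) \<in> \<alpha>" using fiberD(2)[OF \<gamma>] by auto
      with y show False by simp
    qed
    moreover have "(c, d) \<in> \<gamma> \<union> transp_boxes \<gamma>"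
      using z fiberD(3)[OF \<gamma>] by simp
    ultimately show ?case
      using in_square_partition_adjacent[OF fiberD(1)[OF \<gamma>] ab _ _ adj] yz by blast
  qed
qed

text \<open>Every pair satisfying these assumptions is in the image of pi_map (of gamma_I \<alpha> \<beta> {}, say),
  so the locale loses no generality.\<close>

locale symmetric_pair =
  fixes n :: nat and \<alpha> \<beta> :: "box set"
  assumes partition_\<alpha>: "in_square_partition n \<alpha>"
    and partition_\<beta>: "in_square_partition n \<beta>"
    and transp_\<alpha>: "transp_boxes \<alpha> = \<alpha>"
    and transp_\<beta>: "transp_boxes \<beta> = \<beta>"
    and \<alpha>_subset_\<beta>: "\<alpha> \<subseteq> \<beta>"
    and diagonal_\<beta>: "(a, a) \<in> \<beta> \<Longrightarrow> (a, a) \<in> \<alpha>"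
begin

abbreviation comps :: "box set set" where
  "comps \<equiv> components (Pi_plus \<alpha> \<beta>)"

lemma \<alpha>_swap: "(a, b) \<in> \<alpha> \<longleftrightarrow> (b, a) \<in> \<alpha>"
  using transp_\<alpha> by (metis mem_transp_boxes swap_simp)

lemma \<beta>_swap: "(a, b) \<in> \<beta> \<longleftrightarrow> (b, a) \<in> \<beta>"
  using transp_\<beta> by (metis mem_transp_boxes swap_simp)

lemma mem_gamma_I:
  assumes "I \<subseteq> comps"
  shows "(r, c) \<in> gamma_I \<alpha> \<beta> I \<longleftrightarrow> (r, c) \<in> \<alpha>
    \<or> (r, c) \<in> Pi_plus \<alpha> \<beta> \<and> component_of (Pi_plus \<alpha> \<beta>) (r, c) \<in> I
    \<or> (c, r) \<in> Pi_plus \<alpha> \<beta> \<and> component_of (Pi_plus \<alpha> \<beta>) (c, r) \<notin> I"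
proof -
  have "(r, c) \<in> gamma_I \<alpha> \<beta> I \<longleftrightarrow> (r, c) \<in> \<alpha> \<or> (r, c) \<in> \<Union>I \<or> (c, r) \<in> \<Union>(comps - I)"
    by (auto simp: gamma_I_def)
  also have "(r, c) \<in> \<Union>I \<longleftrightarrow> (r, c) \<in> Pi_plus \<alpha> \<beta> \<and> component_of (Pi_plus \<alpha> \<beta>) (r, c) \<in> I"
    by (rule mem_Union_components[OF assms])
  also have "(c, r) \<in> \<Union>(comps - I) \<longleftrightarrow>
      (c, r) \<in> Pi_plus \<alpha> \<beta> \<and> component_of (Pi_plus \<alpha> \<beta>) (c, r) \<in> comps - I"
    by (rule mem_Union_components) auto
  finally show ?thesis
    using component_of_in_components by blast
qed

lemma gamma_I_subset_\<beta>: "I \<subseteq> comps \<Longrightarrow> gamma_I \<alpha> \<beta> I \<subseteq> \<beta>"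
  using \<alpha>_subset_\<beta> by (auto simp: mem_gamma_I \<beta>_swap)

lemma gamma_I_closed_adjacent_below:
  assumes I: "I \<subseteq> comps" and x: "(r, c) \<in> gamma_I \<alpha> \<beta> I" and z: "(r', c') \<in> \<beta>"
    and adj: "box_adj (r, c) (r', c')" and le: "r' \<le> r" "c' \<le> c"
  shows "(r', c') \<in> gamma_I \<alpha> \<beta> I"
proof (cases "(r', c') \<in> \<alpha>")
  case True
  then show ?thesis by (simp add: mem_gamma_I[OF I])
next
  case False
  have "(r, c) \<notin> \<alpha>"
    using False in_square_partition_downward[OF partition_\<alpha>] in_square_partition_pos[OF partition_\<beta> z] le
    by blast
  moreover have "(r, c) \<in> \<beta>"
    using gamma_I_subset_\<beta>[OF I] x by blast
  ultimately have "r \<noteq> c" "r' \<noteq> c'"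
    using False z diagonal_\<beta> by auto
  then have side: "r < c \<longleftrightarrow> r' < c'"
    using box_adj_same_side[OF adj] by blast
  consider "(r, c) \<in> Pi_plus \<alpha> \<beta>" "component_of (Pi_plus \<alpha> \<beta>) (r, c) \<in> I"
    | "(c, r) \<in> Pi_plus \<alpha> \<beta>" "component_of (Pi_plus \<alpha> \<beta>) (c, r) \<notin> I"
    using x \<open>(r, c) \<notin> \<alpha>\<close> by (auto simp: mem_gamma_I[OF I])
  then show ?thesis
  proof cases
    case 1
    with False z side have "(r', c') \<in> Pi_plus \<alpha> \<beta>" by simp
    with 1 adj show ?thesis
      using component_of_eq_adjacent by (metis mem_gamma_I[OF I])
  next
    case 2
    with False z side \<open>r' \<noteq> c'\<close> have "(c', r') \<in> Pi_plus \<alpha> \<beta>" by (simp add: \<alpha>_swap \<beta>_swap)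
    moreover have "box_adj (c, r) (c', r')"
      using adj box_adj_swap[of "(r, c)" "(r', c')"] by simp
    ultimately show ?thesis
      using 2 component_of_eq_adjacent by (metis mem_gamma_I[OF I])
  qed
qed

lemma in_square_partition_gamma_I:
  assumes I: "I \<subseteq> comps"
  shows "in_square_partition n (gamma_I \<alpha> \<beta> I)"
proof (rule in_square_partitionI)
  show "gamma_I \<alpha> \<beta> I \<subseteq> {1..n} \<times> {1..n}"
    using gamma_I_subset_\<beta>[OF I] partition_\<beta> by (auto simp: in_square_partition_def)
next
  fix r c
  assume x: "(r, Suc c) \<in> gamma_I \<alpha> \<beta> I" and "0 < c"
  with gamma_I_subset_\<beta>[OF I] have x\<beta>: "(r, Suc c) \<in> \<beta>" by blast
  have "(r, c) \<in> \<beta>"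
    by (rule in_square_partition_downward[OF partition_\<beta> x\<beta>])
      (use in_square_partition_pos[OF partition_\<beta> x\<beta>] \<open>0 < c\<close> in auto)
  with x show "(r, c) \<in> gamma_I \<alpha> \<beta> I"
    by (rule gamma_I_closed_adjacent_below[OF I]) (auto simp: box_adj_def)
next
  fix r c
  assume x: "(Suc r, c) \<in> gamma_I \<alpha> \<beta> I" and "0 < r"
  with gamma_I_subset_\<beta>[OF I] have x\<beta>: "(Suc r, c) \<in> \<beta>" by blast
  have "(r, c) \<in> \<beta>"
    by (rule in_square_partition_downward[OF partition_\<beta> x\<beta>])
      (use in_square_partition_pos[OF partition_\<beta> x\<beta>] \<open>0 < r\<close> in auto)
  with x show "(r, c) \<in> gamma_I \<alpha> \<beta> I"
    by (rule gamma_I_closed_adjacent_below[OF I]) (auto simp: box_adj_def)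
qed

lemma pi_map_gamma_I:
  assumes I: "I \<subseteq> comps"
  shows "pi_map (gamma_I \<alpha> \<beta> I) = (\<alpha>, \<beta>)"
proof -
  let ?\<gamma> = "gamma_I \<alpha> \<beta> I"
  have "(r, c) \<in> ?\<gamma> \<inter> transp_boxes ?\<gamma> \<longleftrightarrow> (r, c) \<in> \<alpha>" for r c
    using mem_gamma_I[OF I, of r c] mem_gamma_I[OF I, of c r] \<alpha>_swap[of r c] by auto
  moreover have "(r, c) \<in> ?\<gamma> \<union> transp_boxes ?\<gamma> \<longleftrightarrow> (r, c) \<in> \<beta>" for r c
    using mem_gamma_I[OF I, of r c] mem_gamma_I[OF I, of c r] \<alpha>_swap[of r c] \<beta>_swap[of r c]
      \<alpha>_subset_\<beta> diagonal_\<beta>[of r] by (cases "r < c") auto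
  ultimately show ?thesis
    unfolding pi_map_def by (auto simp del: mem_transp_boxes)
qed

lemma gamma_I_in_fiber: "I \<subseteq> comps \<Longrightarrow> gamma_I \<alpha> \<beta> I \<in> fiber n \<alpha> \<beta>"
  by (simp add: fiber_def in_square_partition_gamma_I pi_map_gamma_I)

definition chosen_components :: "box set \<Rightarrow> box set set" where
  "chosen_components \<gamma> = {S \<in> comps. S \<subseteq> \<gamma>}"

lemma chosen_components_gamma_I:
  assumes I: "I \<subseteq> comps"
  shows "chosen_components (gamma_I \<alpha> \<beta> I) = I"
proof (intro set_eqI iffI)
  fix S
  assume "S \<in> chosen_components (gamma_I \<alpha> \<beta> I)"
  then have S: "S \<in> comps" "S \<subseteq> gamma_I \<alpha> \<beta> I"
    by (auto simp: chosen_components_def)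
  obtain r c where rc: "(r, c) \<in> S"
    using components_nonempty[OF S(1)] by auto
  have "(r, c) \<in> Pi_plus \<alpha> \<beta>"
    using components_subset[OF S(1)] rc by blast
  with S(2) rc have "component_of (Pi_plus \<alpha> \<beta>) (r, c) \<in> I"
    by (auto simp: mem_gamma_I[OF I])
  with components_eq_component_of[OF S(1) rc] show "S \<in> I" by simp
next
  fix S
  assume "S \<in> I"
  with I show "S \<in> chosen_components (gamma_I \<alpha> \<beta> I)"
    by (auto simp: chosen_components_def gamma_I_def)
qed

lemma gamma_I_chosen_components:
  assumes \<gamma>: "\<gamma> \<in> fiber n \<alpha> \<beta>"
  shows "gamma_I \<alpha> \<beta> (chosen_components \<gamma>) = \<gamma>"
proof (intro set_eqI)
  fix x :: box
  obtain r c where x: "x = (r, c)" by fastforce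
  have I: "chosen_components \<gamma> \<subseteq> comps"
    by (auto simp: chosen_components_def)
  have chosen: "component_of (Pi_plus \<alpha> \<beta>) y \<in> chosen_components \<gamma> \<longleftrightarrow> y \<in> \<gamma>"
    if y: "y \<in> Pi_plus \<alpha> \<beta>" for y
  proof
    assume "component_of (Pi_plus \<alpha> \<beta>) y \<in> chosen_components \<gamma>"
    with mem_component_of_self[OF y] show "y \<in> \<gamma>"
      by (auto simp: chosen_components_def)
  next
    assume "y \<in> \<gamma>"
    with fiber_component_of_subset[OF \<gamma> y] component_of_in_components[OF y]
    show "component_of (Pi_plus \<alpha> \<beta>) y \<in> chosen_components \<gamma>"
      by (simp add: chosen_components_def)
  qed
  have "x \<in> gamma_I \<alpha> \<beta> (chosen_components \<gamma>) \<longleftrightarrow> (r, c) \<in> \<alpha>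
      \<or> (r, c) \<in> Pi_plus \<alpha> \<beta> \<and> (r, c) \<in> \<gamma> \<or> (c, r) \<in> Pi_plus \<alpha> \<beta> \<and> (c, r) \<notin> \<gamma>"
    unfolding x mem_gamma_I[OF I] using chosen by blast
  moreover have "(r, c) \<in> \<alpha> \<longleftrightarrow> (r, c) \<in> \<gamma> \<and> (c, r) \<in> \<gamma>" "(c, r) \<in> \<alpha> \<longleftrightarrow> (r, c) \<in> \<gamma> \<and> (c, r) \<in> \<gamma>"
    using fiberD(2)[OF \<gamma>] by auto
  moreover have "(r, c) \<in> \<beta> \<longleftrightarrow> (r, c) \<in> \<gamma> \<or> (c, r) \<in> \<gamma>" "(c, r) \<in> \<beta> \<longleftrightarrow> (r, c) \<in> \<gamma> \<or> (c, r) \<in> \<gamma>"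
    using fiberD(3)[OF \<gamma>] by auto
  moreover have "(r, c) \<in> \<beta> \<Longrightarrow> (r, c) \<notin> \<alpha> \<Longrightarrow> r \<noteq> c"
    using diagonal_\<beta> by auto
  ultimately show "x \<in> gamma_I \<alpha> \<beta> (chosen_components \<gamma>) \<longleftrightarrow> x \<in> \<gamma>"
    unfolding x mem_Pi_plus by (cases "r < c") auto
qed

theorem bij_betw_gamma_I: "bij_betw (gamma_I \<alpha> \<beta>) (Pow comps) (fiber n \<alpha> \<beta>)"
  by (rule bij_betw_byWitness[where f' = chosen_components])
    (auto simp: chosen_components_gamma_I gamma_I_chosen_components gamma_I_in_fiber,
     auto simp: chosen_components_def)

lemma transp_boxes_gamma_I:
  assumes "I \<subseteq> comps"
  shows "transp_boxes (gamma_I \<alpha> \<beta> I) = gamma_I \<alpha> \<beta> (comps - I)"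
proof -
  have "comps - (comps - I) = I"
    using assms by blast
  then show ?thesis
    unfolding gamma_I_def transp_boxes_def using transp_\<alpha>[unfolded transp_boxes_def]
    by (simp add: image_Un image_UN image_Union image_comp case_prod_beta Un_ac)
qed

lemma northeast_gamma_I_comps: "northeast (gamma_I \<alpha> \<beta> comps)"
  unfolding northeast_def
proof (intro allI impI)
  fix r c
  assume "(r, c) \<in> gamma_I \<alpha> \<beta> comps \<and> c < r"
  then have "(r, c) \<in> \<alpha>"
    using component_of_in_components by (auto simp: mem_gamma_I)
  then show "(c, r) \<in> gamma_I \<alpha> \<beta> comps"
    by (simp add: mem_gamma_I \<alpha>_swap)
qed

lemma fiber_northeast_eq:
  assumes \<gamma>: "\<gamma> \<in> fiber n \<alpha> \<beta>" and ne: "northeast \<gamma>"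
  shows "\<gamma> = gamma_I \<alpha> \<beta> comps"
proof -
  have "Pi_plus \<alpha> \<beta> \<subseteq> \<gamma>"
  proof
    fix x
    assume x: "x \<in> Pi_plus \<alpha> \<beta>"
    obtain r c where rc: "x = (r, c)" by fastforce
    show "x \<in> \<gamma>"
    proof (rule ccontr)
      assume "x \<notin> \<gamma>"
      with x rc fiberD(3)[OF \<gamma>] have "(c, r) \<in> \<gamma>" by auto
      with ne x rc have "x \<in> \<gamma>" by (auto simp: northeast_def)
      with \<open>x \<notin> \<gamma>\<close> show False ..
    qed
  qed
  then have "chosen_components \<gamma> = comps"
    using components_subset by (auto simp: chosen_components_def)
  then show ?thesis
    using gamma_I_chosen_components[OF \<gamma>] by simp
qed

lemma southwest_gamma_I_empty: "southwest (gamma_I \<alpha> \<beta> {})"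
  using northeast_gamma_I_comps by (simp add: southwest_def transp_boxes_gamma_I)

lemma fiber_southwest_eq:
  assumes \<gamma>: "\<gamma> \<in> fiber n \<alpha> \<beta>" and sw: "southwest \<gamma>"
  shows "\<gamma> = gamma_I \<alpha> \<beta> {}"
proof -
  have "transp_boxes \<gamma> = gamma_I \<alpha> \<beta> comps"
    using fiber_northeast_eq transp_boxes_in_fiber[OF \<gamma>] sw by (simp add: southwest_def)
  then have "\<gamma> = transp_boxes (gamma_I \<alpha> \<beta> comps)"
    by (metis transp_boxes_transp_boxes)
  then show ?thesis
    by (simp add: transp_boxes_gamma_I)
qed

end

lemma symmetric_pair_pi_map:
  assumes \<gamma>: "in_square_partition n \<gamma>" and \<pi>: "pi_map \<gamma> = (\<alpha>, \<beta>)"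
  shows "symmetric_pair n \<alpha> \<beta>"
proof -
  have \<alpha>: "\<alpha> = \<gamma> \<inter> transp_boxes \<gamma>" and \<beta>: "\<beta> = \<gamma> \<union> transp_boxes \<gamma>"
    using \<pi> by (auto simp: pi_map_def)
  show ?thesis
    by unfold_locales
      (use \<gamma> in_square_partition_transp[OF \<gamma>] in
        \<open>auto simp: \<alpha> \<beta> in_square_partition_Int in_square_partition_Un simp del: mem_transp_boxes\<close>,
       auto simp: \<alpha> \<beta>)
qed

theorem proposition2p10:
  fixes n :: nat and \<alpha> \<beta> :: "box set"
  assumes "n \<ge> 1"
    and "(\<alpha>, \<beta>) \<in> pi_map ` {\<gamma>. in_square_partition n \<gamma>}"
  shows "bij_betw (gamma_I \<alpha> \<beta>) (Pow (components (Pi_plus \<alpha> \<beta>))) (fiber n \<alpha> \<beta>)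
    \<and> (\<exists>!\<gamma>. \<gamma> \<in> fiber n \<alpha> \<beta> \<and> northeast \<gamma>)
    \<and> gamma_I \<alpha> \<beta> (components (Pi_plus \<alpha> \<beta>)) \<in> fiber n \<alpha> \<beta>
    \<and> northeast (gamma_I \<alpha> \<beta> (components (Pi_plus \<alpha> \<beta>)))
    \<and> (\<exists>!\<gamma>. \<gamma> \<in> fiber n \<alpha> \<beta> \<and> southwest \<gamma>)
    \<and> gamma_I \<alpha> \<beta> {} \<in> fiber n \<alpha> \<beta>
    \<and> southwest (gamma_I \<alpha> \<beta> {})"
proof -
  obtain \<gamma> where "in_square_partition n \<gamma>" "pi_map \<gamma> = (\<alpha>, \<beta>)"
    using assms(2) by auto
  then interpret symmetric_pair n \<alpha> \<beta>
    by (rule symmetric_pair_pi_map)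
  show ?thesis
    using bij_betw_gamma_I gamma_I_in_fiber[of comps] gamma_I_in_fiber[of "{}"]
      northeast_gamma_I_comps southwest_gamma_I_empty fiber_northeast_eq fiber_southwest_eq
    by blast
qed

end
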